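(* Let $S\ge1$ and $k\ge2$ be integers, and let $(e_n(s))_{n\ge1,1\le s\le S}$ be independent random variables uniform on $\{-1,+1\}$. For $N\ge1$ put $G_{N,S}(s)=(e_1(s),\dots,e_N(s))$, $1\le s\le S$. Let $N_1<N_2<\cdots$ be a strictly increasing sequence of positive integers. Then, almost surely, \[ \Phi_k(G_{N_{r+1},S})-\Phi_k(G_{N_r,S})\le\sqrt{6(N_{r+1}-N_r)(k-1)\log N_{r+1}} \] for all sufficiently large $r$.
   Context: For a map $G_{N,S}:\{1,\dots,S\}\to\{-1,+1\}^N$, $G_{N,S}(s)=(e_1(s),\dots,e_N(s))$, the cross-correlation measure of order $k$ is \[ \Phi_k(G_{N,S})=\max\left|\sum_{n=1}^M e_{n+d_1}(s_1)\cdots e_{n+d_k}(s_k)\right|, \] the maximum taken over all integers $M,d_1,\dots,d_k$ and $1\le s_1,\dots,s_k\le S$ with $0\le d_1\le\dots\le d_k<M+d_k\le N$ and $d_i\ne d_j$ whenever $s_i=s_j$. $\log$ is the natural logarithm. *)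

theory Defs
  imports "HOL-Probability.Probability"
begin

definition ccm_admissible ::
    "nat \<Rightarrow> nat \<Rightarrow> nat \<Rightarrow> nat \<Rightarrow> (nat \<Rightarrow> nat) \<Rightarrow> (nat \<Rightarrow> nat) \<Rightarrow> bool" where
  "ccm_admissible k S N M d s \<longleftrightarrow>
     (\<forall>i\<in>{1..k}. 1 \<le> s i \<and> s i \<le> S) \<and>
     (\<forall>i\<in>{1..k}. \<forall>j\<in>{1..k}. i \<le> j \<longrightarrow> d i \<le> d j) \<and>
     d k < M + d k \<and> M + d k \<le> N \<and>
     (\<forall>i\<in>{1..k}. \<forall>j\<in>{1..k}. i \<noteq> j \<and> s i = s j \<longrightarrow> d i \<noteq> d j)"

text \<open>Cross-correlation measure Phi_k(G_{N,S}) of the sequences e(n,s) (n \<ge> 1, 1 \<le> s \<le> S).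
  The maximum over an empty set of parameters is taken to be 0.\<close>
definition cross_corr :: "nat \<Rightarrow> nat \<Rightarrow> nat \<Rightarrow> (nat \<Rightarrow> nat \<Rightarrow> real) \<Rightarrow> real" where
  "cross_corr k S N e = Max (insert 0
     {\<bar>\<Sum>n=1..M. \<Prod>i=1..k. e (n + d i) (s i)\<bar> | M d s. ccm_admissible k S N M d s})"

end

theory Submission
  imports Defs
begin

text \<open>Passing from length N to N' > N, every correlation sum splits into a correlation sum of
  length N and a tail whose terms all involve an index in (N, N']. Written in its last index,
  such a tail is a sum over a window of products of lagged signs, and its terms behave like
  independent fair signs. So each window sum obeys the sub-Gaussian bound 2 exp (-t^2 / 2L)
  for its length L, and a union bound over the polynomially many windows, summed geometrically
  over window positions, shows that the increment of the measure exceeds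
  sqrt (6 (N' - N) (k - 1) log N') with probability O(1 / N'^2 + (N' - N) / (N' log^2 N')).
  Along N_1 < N_2 < ... these bounds telescope to a convergent series, and Borel-Cantelli
  concludes.\<close>

text \<open>cosh l = E exp (l X) for a fair sign X = 2 B - 1 with B Bernoulli(1/2), so this is
  Hoeffding's lemma for B.\<close>
lemma cosh_le_exp_half_square: "cosh (l::real) \<le> exp (l^2 / 2)"
proof -
  have "cosh l \<le> exp (l^2 / 2)" if "l \<ge> 0" for l :: real
  proof -
    have pos: "1 + (1/2) * (exp (2*l) - 1) > 0" by (simp add: field_simps add_pos_pos)
    have "exp (-(2*l) * (1/2) + ln (1 + (1/2) * (exp (2*l) - 1)))
        = exp (-l) * (1 + (1/2) * (exp (2*l) - 1))"
      using pos by (simp only: exp_add exp_ln) simp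
    also have "\<dots> = cosh l"
      unfolding cosh_def exp_minus exp_double
      by (simp add: field_simps power2_eq_square)
    finally have "cosh l = exp (-(2*l) * (1/2) + ln (1 + (1/2) * (exp (2*l) - 1)))" by simp
    also have "\<dots> \<le> exp ((2*l)^2 / 8)"
      using Hoeffdings_lemma_aux[of "2*l" "1/2"] that by simp
    also have "(2*l)^2 / 8 = l^2 / 2" by (simp add: power2_eq_square)
    finally show ?thesis .
  qed
  from this[of l] this[of "-l"] show ?thesis by (cases "l \<ge> 0") auto
qed

lemma prod_in_plus_minus_one:
  assumes "finite I" "\<forall>i\<in>I. f i \<in> {-1, 1::real}"
  shows "prod f I \<in> {-1, 1}"
  using assms by (induction I rule: finite_induct) auto

lemma sum_exp_sign_flip:
  fixes P T :: "'b \<Rightarrow> real"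
  assumes "bij_betw \<phi> X X"
    and "\<And>x. x \<in> X \<Longrightarrow> P (\<phi> x) = - P x" "\<And>x. x \<in> X \<Longrightarrow> T (\<phi> x) = T x"
    and "\<And>x. x \<in> X \<Longrightarrow> P x \<in> {-1, 1}"
  shows "(\<Sum>x\<in>X. exp (l * (P x + T x))) = cosh l * (\<Sum>x\<in>X. exp (l * T x))"
proof -
  have flipped: "(\<Sum>x\<in>X. exp (l * (- P x + T x))) = (\<Sum>x\<in>X. exp (l * (P x + T x)))"
  proof -
    have "(\<Sum>x\<in>X. exp (l * (- P x + T x))) = (\<Sum>x\<in>X. exp (l * (P (\<phi> x) + T (\<phi> x))))"
      by (intro sum.cong refl) (simp add: assms(2,3))
    also have "\<dots> = (\<Sum>x\<in>X. exp (l * (P x + T x)))"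
      by (rule sum.reindex_bij_betw[OF assms(1)])
    finally show ?thesis .
  qed
  have pair: "exp (l * (p + t)) + exp (l * (- p + t)) = 2 * cosh l * exp (l * t)"
    if "p \<in> {-1, 1}" for p t :: real
  proof -
    have "exp (l * (p + t)) + exp (l * (- p + t)) = (exp (l * p) + exp (- (l * p))) * exp (l * t)"
      by (simp add: algebra_simps exp_add[symmetric])
    also have "exp (l * p) + exp (- (l * p)) = 2 * cosh l"
      using that by (auto simp: cosh_def)
    finally show ?thesis .
  qed
  have "2 * (\<Sum>x\<in>X. exp (l * (P x + T x)))
      = (\<Sum>x\<in>X. exp (l * (P x + T x)) + exp (l * (- P x + T x)))"
    unfolding sum.distrib flipped by (rule mult_2)
  also have "\<dots> = (\<Sum>x\<in>X. 2 * cosh l * exp (l * T x))"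
    by (intro sum.cong refl pair assms(4))
  also have "\<dots> = 2 * (cosh l * (\<Sum>x\<in>X. exp (l * T x)))"
    by (simp add: sum_distrib_left mult.assoc)
  finally show ?thesis by linarith
qed

section \<open>Sums of products of random signs\<close>

definition sign_configs :: "'b set \<Rightarrow> ('b \<Rightarrow> real) set" where
  "sign_configs C = PiE C (\<lambda>_. {-1, 1})"

lemma finite_sign_configs: "finite C \<Longrightarrow> finite (sign_configs C)"
  unfolding sign_configs_def by (rule finite_PiE) auto

lemma card_sign_configs: "finite C \<Longrightarrow> card (sign_configs C) = 2 ^ card C"
  unfolding sign_configs_def by (simp add: card_PiE numeral_2_eq_2)

definition lag_prod :: "nat \<Rightarrow> (nat \<Rightarrow> nat) \<Rightarrow> (nat \<Rightarrow> nat) \<Rightarrow> nat \<Rightarrow> (nat \<times> nat \<Rightarrow> real) \<Rightarrow> real" where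
  "lag_prod k h s m x = (\<Prod>i=1..k. x (m - h i, s i))"

definition lag_sum :: "nat \<Rightarrow> (nat \<Rightarrow> nat) \<Rightarrow> (nat \<Rightarrow> nat) \<Rightarrow> nat set \<Rightarrow> (nat \<times> nat \<Rightarrow> real) \<Rightarrow> real" where
  "lag_sum k h s W x = (\<Sum>m\<in>W. lag_prod k h s m x)"

text \<open>The sign with the largest index in the last term occurs in no other term, so flipping it
  negates that term and fixes all the others.\<close>
lemma sum_sign_configs_exp_lag_sum_insert:
  fixes C :: "(nat \<times> nat) set" and l :: real
  assumes A: "finite A" "\<forall>m\<in>A. m < b" and k: "k \<ge> 1"
    and b_inside: "\<And>i. i \<in> {1..k} \<Longrightarrow> h i < b \<and> (b - h i, s i) \<in> C"
    and A_inside: "\<And>m i. m \<in> A \<Longrightarrow> i \<in> {1..k} \<Longrightarrow> h i < m"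
    and distinct: "\<And>i j. i \<in> {1..k} \<Longrightarrow> j \<in> {1..k} \<Longrightarrow> i \<noteq> j \<Longrightarrow> (h i, s i) \<noteq> (h j, s j)"
  shows "(\<Sum>x\<in>sign_configs C. exp (l * lag_sum k h s (insert b A) x))
       = cosh l * (\<Sum>x\<in>sign_configs C. exp (l * lag_sum k h s A x))"
proof -
  obtain i0 where i0: "i0 \<in> {1..k}" "\<And>i. i \<in> {1..k} \<Longrightarrow> h i0 \<le> h i"
    using ex_has_least_nat[of "\<lambda>i. i \<in> {1..k}" 1 h] k by auto
  define c0 where "c0 = (b - h i0, s i0)"
  define flip where "flip x = x(c0 := - x c0)" for x :: "nat \<times> nat \<Rightarrow> real"
  have "c0 \<in> C" using b_inside i0(1) by (simp add: c0_def)
  then have "flip x \<in> sign_configs C" if "x \<in> sign_configs C" for x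
    using that by (auto simp: flip_def sign_configs_def PiE_iff extensional_def)
  then have bij: "bij_betw flip (sign_configs C) (sign_configs C)"
    by (intro bij_betwI[of flip _ _ flip]) (auto simp: flip_def)
  have old: "lag_sum k h s A (flip x) = lag_sum k h s A x" for x
    unfolding lag_sum_def lag_prod_def
  proof (intro sum.cong refl prod.cong)
    fix m i assume "m \<in> A" "i \<in> {1..k}"
    then have "h i < m" "m < b" "h i0 \<le> h i" using A(2) A_inside i0(2) by auto
    then have "m - h i < b - h i0" by linarith
    then show "flip x (m - h i, s i) = x (m - h i, s i)" by (auto simp: flip_def c0_def)
  qed
  have new: "lag_prod k h s b (flip x) = - lag_prod k h s b x" for x
  proof -
    have factor: "lag_prod k h s b y = y c0 * (\<Prod>i\<in>{1..k}-{i0}. y (b - h i, s i))" for y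
      unfolding lag_prod_def c0_def using i0(1) by (subst prod.remove[of _ i0]) auto
    have "(b - h i, s i) \<noteq> c0" if "i \<in> {1..k} - {i0}" for i
      using that b_inside[of i] b_inside[of i0] i0(1) distinct[of i i0] by (auto simp: c0_def)
    then have "(\<Prod>i\<in>{1..k}-{i0}. flip x (b - h i, s i)) = (\<Prod>i\<in>{1..k}-{i0}. x (b - h i, s i))"
      by (intro prod.cong) (auto simp: flip_def)
    then show ?thesis unfolding factor by (simp add: flip_def)
  qed
  have sign: "lag_prod k h s b x \<in> {-1, 1}" if "x \<in> sign_configs C" for x
    unfolding lag_prod_def
    using that b_inside by (intro prod_in_plus_minus_one) (auto simp: sign_configs_def PiE_iff)
  have "b \<notin> A" using A(2) by blast
  then have "lag_sum k h s (insert b A) x = lag_prod k h s b x + lag_sum k h s A x" for x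
    using A(1) by (simp add: lag_sum_def)
  then show ?thesis
    by (simp only:) (rule sum_exp_sign_flip[OF bij]; use new old sign in auto)
qed

lemma sum_sign_configs_exp_lag_sum:
  fixes C :: "(nat \<times> nat) set" and l :: real
  assumes "finite W" and k: "k \<ge> 1"
    and inside: "\<And>m i. m \<in> W \<Longrightarrow> i \<in> {1..k} \<Longrightarrow> h i < m \<and> (m - h i, s i) \<in> C"
    and distinct: "\<And>i j. i \<in> {1..k} \<Longrightarrow> j \<in> {1..k} \<Longrightarrow> i \<noteq> j \<Longrightarrow> (h i, s i) \<noteq> (h j, s j)"
  shows "(\<Sum>x\<in>sign_configs C. exp (l * lag_sum k h s W x)) = card (sign_configs C) * cosh l ^ card W"
  using assms(1) inside
proof (induction W rule: finite_linorder_max_induct)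
  case empty
  then show ?case by (simp add: lag_sum_def)
next
  case (insert b A)
  have "b \<notin> A" using insert.hyps(2) by blast
  with insert.hyps(1) have "card (insert b A) = Suc (card A)" by simp
  moreover have "(\<Sum>x\<in>sign_configs C. exp (l * lag_sum k h s (insert b A) x))
      = cosh l * (card (sign_configs C) * cosh l ^ card A)"
    using insert sum_sign_configs_exp_lag_sum_insert[OF insert.hyps(1,2) k _ _ distinct] by simp
  ultimately show ?case by simp
qed

lemma card_ge_le_sum_exp:
  fixes f :: "'b \<Rightarrow> real"
  assumes "finite X"
  shows "real (card {x\<in>X. c \<le> f x}) \<le> exp (- c) * (\<Sum>x\<in>X. exp (f x))"
proof -
  have "real (card {x\<in>X. c \<le> f x}) = (\<Sum>x\<in>{x\<in>X. c \<le> f x}. 1)" by simp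
  also have "\<dots> \<le> (\<Sum>x\<in>{x\<in>X. c \<le> f x}. exp (f x - c))" by (intro sum_mono) auto
  also have "\<dots> \<le> (\<Sum>x\<in>X. exp (f x - c))" using assms by (intro sum_mono2) auto
  also have "\<dots> = exp (- c) * (\<Sum>x\<in>X. exp (f x))"
    by (simp add: sum_distrib_left exp_diff exp_minus field_simps)
  finally show ?thesis .
qed

lemma card_abs_gt_le_subgaussian:
  fixes T :: "'b \<Rightarrow> real"
  assumes X: "finite X" and L: "L > 0" and t: "t \<ge> 0"
    and mgf: "\<And>l. (\<Sum>x\<in>X. exp (l * T x)) \<le> real (card X) * exp (l^2 * L / 2)"
  shows "real (card {x\<in>X. t < \<bar>T x\<bar>}) \<le> 2 * real (card X) * exp (- (t^2 / (2 * L)))"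
proof -
  define l where "l = t / L"
  have one_side: "real (card {x\<in>X. t^2 / L \<le> \<sigma> * l * T x}) \<le> real (card X) * exp (- (t^2 / (2 * L)))"
    if "\<sigma> \<in> {-1, 1}" for \<sigma> :: real
  proof -
    have "real (card {x\<in>X. t^2 / L \<le> \<sigma> * l * T x}) \<le> exp (- (t^2 / L)) * (\<Sum>x\<in>X. exp ((\<sigma> * l) * T x))"
      using card_ge_le_sum_exp[OF X] by (simp add: mult.assoc)
    also have "\<dots> \<le> exp (- (t^2 / L)) * (real (card X) * exp ((\<sigma> * l)^2 * L / 2))"
      by (intro mult_left_mono mgf) auto
    also have "\<dots> = real (card X) * exp (- (t^2 / L) + (\<sigma> * l)^2 * L / 2)"
      by (simp only: exp_add mult_ac)
    also have "- (t^2 / L) + (\<sigma> * l)^2 * L / 2 = - (t^2 / (2 * L))"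
      using that L by (auto simp: l_def power2_eq_square field_simps)
    finally show ?thesis .
  qed
  have tl: "t^2 / L = l * t" using L by (simp add: l_def power2_eq_square)
  have l: "l \<ge> 0" using L t by (simp add: l_def)
  have "{x\<in>X. t < \<bar>T x\<bar>} \<subseteq> {x\<in>X. t^2 / L \<le> 1 * l * T x} \<union> {x\<in>X. t^2 / L \<le> -1 * l * T x}"
  proof
    fix x assume "x \<in> {x\<in>X. t < \<bar>T x\<bar>}"
    then have "x \<in> X" "l * t \<le> l * \<bar>T x\<bar>" using l by (auto intro: mult_left_mono)
    then show "x \<in> {x\<in>X. t^2 / L \<le> 1 * l * T x} \<union> {x\<in>X. t^2 / L \<le> -1 * l * T x}"
      unfolding tl by (cases "T x \<ge> 0") auto
  qed
  then have "card {x\<in>X. t < \<bar>T x\<bar>}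
      \<le> card ({x\<in>X. t^2 / L \<le> 1 * l * T x} \<union> {x\<in>X. t^2 / L \<le> -1 * l * T x})"
    by (intro card_mono) (use X in auto)
  also have "\<dots> \<le> card {x\<in>X. t^2 / L \<le> 1 * l * T x} + card {x\<in>X. t^2 / L \<le> -1 * l * T x}"
    by (rule card_Un_le)
  finally have "real (card {x\<in>X. t < \<bar>T x\<bar>})
      \<le> card {x\<in>X. t^2 / L \<le> 1 * l * T x} + card {x\<in>X. t^2 / L \<le> -1 * l * T x}"
    by linarith
  then show ?thesis using one_side[of 1] one_side[of "-1"] by simp
qed

lemma card_sign_configs_abs_lag_sum_gt:
  fixes C :: "(nat \<times> nat) set" and t :: real
  assumes C: "finite C" and W: "finite W" "W \<noteq> {}" and k: "k \<ge> 1" and t: "t \<ge> 0"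
    and inside: "\<And>m i. m \<in> W \<Longrightarrow> i \<in> {1..k} \<Longrightarrow> h i < m \<and> (m - h i, s i) \<in> C"
    and distinct: "\<And>i j. i \<in> {1..k} \<Longrightarrow> j \<in> {1..k} \<Longrightarrow> i \<noteq> j \<Longrightarrow> (h i, s i) \<noteq> (h j, s j)"
  shows "real (card {x\<in>sign_configs C. t < \<bar>lag_sum k h s W x\<bar>})
         \<le> 2 * real (card (sign_configs C)) * exp (- (t^2 / (2 * real (card W))))"
proof (rule card_abs_gt_le_subgaussian[OF finite_sign_configs[OF C] _ t])
  show "real (card W) > 0" using W by (simp add: card_gt_0_iff)
  fix l :: real
  have "cosh l ^ card W \<le> exp (l^2 / 2) ^ card W"
    by (intro power_mono cosh_le_exp_half_square) auto
  also have "\<dots> = exp (l^2 * card W / 2)"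
    by (simp add: exp_of_nat_mult[symmetric] algebra_simps)
  finally have cosh_bound: "cosh l ^ card W \<le> exp (l^2 * card W / 2)" .
  have "(\<Sum>x\<in>sign_configs C. exp (l * lag_sum k h s W x)) = card (sign_configs C) * cosh l ^ card W"
    by (rule sum_sign_configs_exp_lag_sum[OF W(1) k inside distinct])
  also have "\<dots> \<le> real (card (sign_configs C)) * exp (l^2 * card W / 2)"
    using cosh_bound by (intro mult_left_mono) auto
  finally show "(\<Sum>x\<in>sign_configs C. exp (l * lag_sum k h s W x))
      \<le> real (card (sign_configs C)) * exp (l^2 * card W / 2)" .
qed

section \<open>Increments of the cross-correlation measure\<close>

lemma cross_corr_values_finite:
  "finite {\<bar>\<Sum>n=1..M. \<Prod>i=1..k. x (n + d i) (s i)\<bar> | M d s. ccm_admissible k S N M d s}"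
proof -
  define f where "f = (\<lambda>(M, d, s). \<bar>\<Sum>n=1..M. \<Prod>i=1..k. x (n + d i) (s i)\<bar>)"
  define D where "D = {..N} \<times> PiE {1..k} (\<lambda>_. {..N}) \<times> PiE {1..k} (\<lambda>_. {..S})"
  have "finite D" unfolding D_def by (intro finite_cartesian_product finite_PiE) auto
  moreover have "{\<bar>\<Sum>n=1..M. \<Prod>i=1..k. x (n + d i) (s i)\<bar> | M d s. ccm_admissible k S N M d s} \<subseteq> f ` D"
  proof
    fix v assume "v \<in> {\<bar>\<Sum>n=1..M. \<Prod>i=1..k. x (n + d i) (s i)\<bar> | M d s. ccm_admissible k S N M d s}"
    then obtain M d s where v: "v = \<bar>\<Sum>n=1..M. \<Prod>i=1..k. x (n + d i) (s i)\<bar>"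
      and adm: "ccm_admissible k S N M d s"
      by blast
    have "d i \<le> N" "s i \<le> S" if "i \<in> {1..k}" for i
      using adm that unfolding ccm_admissible_def by fastforce+
    moreover have "M \<le> N" using adm unfolding ccm_admissible_def by auto
    ultimately have "(M, restrict d {1..k}, restrict s {1..k}) \<in> D"
      unfolding D_def by (simp add: PiE_iff)
    moreover have "v = f (M, restrict d {1..k}, restrict s {1..k})"
      unfolding v f_def by (auto intro!: sum.cong prod.cong)
    ultimately show "v \<in> f ` D" by blast
  qed
  ultimately show ?thesis by (meson finite_subset finite_imageI)
qed

lemma cross_corr_nonneg: "0 \<le> cross_corr k S N x"
  unfolding cross_corr_def by (rule Max_ge) (use cross_corr_values_finite in auto)

lemma cross_corr_ge:
  "ccm_admissible k S N M d s \<Longrightarrow> \<bar>\<Sum>n=1..M. \<Prod>i=1..k. x (n + d i) (s i)\<bar> \<le> cross_corr k S N x"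
  unfolding cross_corr_def by (rule Max_ge) (use cross_corr_values_finite in auto)

lemma cross_corr_le:
  assumes "\<And>M d s. ccm_admissible k S N M d s \<Longrightarrow> \<bar>\<Sum>n=1..M. \<Prod>i=1..k. x (n + d i) (s i)\<bar> \<le> B"
    and "0 \<le> B"
  shows "cross_corr k S N x \<le> B"
  unfolding cross_corr_def using assms cross_corr_values_finite by (subst Max_le_iff) auto

definition lags :: "nat \<Rightarrow> (nat \<Rightarrow> nat) \<Rightarrow> nat \<Rightarrow> nat" where
  "lags k h i = (if i = k then 0 else h i)"

text \<open>A tail of a correlation sum of length N' reaching beyond N, rewritten in the last
  index m = n + d k: the lags are h i = d k - d i (so h k = 0) and m runs over a window
  {a..b} of (N, N'].\<close>
definition new_windows :: "nat \<Rightarrow> nat \<Rightarrow> nat \<Rightarrow> nat \<Rightarrow> ((nat \<Rightarrow> nat) \<times> (nat \<Rightarrow> nat) \<times> nat \<times> nat) set" where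
  "new_windows k S N N' = {(h, s, a, b). h \<in> PiE {1..k-1} (\<lambda>_. {..<N'}) \<and> s \<in> PiE {1..k} (\<lambda>_. {1..S}) \<and>
      (\<forall>i\<in>{1..k}. \<forall>j\<in>{1..k}. i \<noteq> j \<longrightarrow> (lags k h i, s i) \<noteq> (lags k h j, s j)) \<and>
      N < a \<and> a \<le> b \<and> b \<le> N' \<and> (\<forall>i\<in>{1..k}. lags k h i < a)}"

definition large_new_window :: "nat \<Rightarrow> nat \<Rightarrow> nat \<Rightarrow> nat \<Rightarrow> real \<Rightarrow> (nat \<times> nat \<Rightarrow> real) \<Rightarrow> bool" where
  "large_new_window k S N N' t x \<longleftrightarrow>
     (\<exists>(h, s, a, b)\<in>new_windows k S N N'. t < \<bar>lag_sum k (lags k h) s {a..b} x\<bar>)"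

lemma new_windows_finite: "finite (new_windows k S N N')"
proof (rule finite_subset)
  show "new_windows k S N N' \<subseteq> PiE {1..k-1} (\<lambda>_. {..<N'}) \<times> PiE {1..k} (\<lambda>_. {1..S}) \<times> {N<..N'} \<times> {N<..N'}"
    unfolding new_windows_def by auto
qed (intro finite_cartesian_product finite_PiE; simp)

lemma admissible_tail_new_window:
  fixes x :: "nat \<Rightarrow> nat \<Rightarrow> real"
  assumes adm: "ccm_admissible k S N' M d s" and k: "k \<ge> 1"
    and tail: "M\<^sub>0 < M" "N \<le> M\<^sub>0 + d k"
  obtains h s' a b where "(h, s', a, b) \<in> new_windows k S N N'"
    and "lag_sum k (lags k h) s' {a..b} (case_prod x) = (\<Sum>n=Suc M\<^sub>0..M. \<Prod>i=1..k. x (n + d i) (s i))"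
proof -
  have dk: "d i \<le> d k" if "i \<in> {1..k}" for i using adm that k unfolding ccm_admissible_def by auto
  have MN': "M + d k \<le> N'" using adm unfolding ccm_admissible_def by auto
  have sS: "s i \<in> {1..S}" if "i \<in> {1..k}" for i using adm that unfolding ccm_admissible_def by auto
  have ddist: "d i \<noteq> d j" if "i \<in> {1..k}" "j \<in> {1..k}" "i \<noteq> j" "s i = s j" for i j
    using adm that unfolding ccm_admissible_def by auto
  define h where "h = restrict (\<lambda>i. d k - d i) {1..k-1}"
  define s' where "s' = restrict s {1..k}"
  have lags: "lags k h i = d k - d i" if "i \<in> {1..k}" for i
    using that by (auto simp: lags_def h_def)
  have "(h, s', Suc M\<^sub>0 + d k, M + d k) \<in> new_windows k S N N'"
    unfolding new_windows_def
  proof (intro CollectI case_prodI conjI)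
    show "h \<in> PiE {1..k-1} (\<lambda>_. {..<N'})" using tail(1) MN' by (auto simp: h_def PiE_iff)
    show "s' \<in> PiE {1..k} (\<lambda>_. {1..S})" using sS by (auto simp: s'_def PiE_iff)
    show "\<forall>i\<in>{1..k}. \<forall>j\<in>{1..k}. i \<noteq> j \<longrightarrow> (lags k h i, s' i) \<noteq> (lags k h j, s' j)"
    proof (intro ballI impI notI)
      fix i j assume ij: "i \<in> {1..k}" "j \<in> {1..k}" "i \<noteq> j"
        and "(lags k h i, s' i) = (lags k h j, s' j)"
      then have "d k - d i = d k - d j" "s i = s j" by (simp_all add: lags s'_def)
      moreover have "d i \<le> d k" "d j \<le> d k" using dk ij by auto
      ultimately show False using ddist[OF ij] by simp
    qed
    show "\<forall>i\<in>{1..k}. lags k h i < Suc M\<^sub>0 + d k" using lags by auto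
  qed (use tail MN' in auto)
  moreover have "lag_sum k (lags k h) s' {Suc M\<^sub>0 + d k..M + d k} (case_prod x)
      = (\<Sum>n=Suc M\<^sub>0..M. \<Prod>i=1..k. x (n + d i) (s i))"
    unfolding lag_sum_def lag_prod_def sum.shift_bounds_cl_nat_ivl
  proof (intro sum.cong refl prod.cong)
    fix n i assume "i \<in> {1..k}"
    then show "case_prod x (n + d k - lags k h i, s' i) = x (n + d i) (s i)"
      using lags dk by (simp add: s'_def)
  qed
  ultimately show ?thesis by (rule that)
qed

text \<open>The prefix of a correlation sum of length N' whose indices stay at most N is a correlation
  sum of length N; the rest is a lag sum over a new window.\<close>
lemma cross_corr_increment_le:
  fixes x :: "nat \<Rightarrow> nat \<Rightarrow> real"
  assumes k: "k \<ge> 1" and t: "0 \<le> t" and small: "\<not> large_new_window k S N N' t (case_prod x)"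
  shows "cross_corr k S N' x - cross_corr k S N x \<le> t"
proof -
  have "cross_corr k S N' x \<le> cross_corr k S N x + t"
  proof (rule cross_corr_le)
    show "0 \<le> cross_corr k S N x + t" using cross_corr_nonneg[of k S N x] t by linarith
  next
    fix M d s assume adm: "ccm_admissible k S N' M d s"
    define P where "P n = (\<Prod>i=1..k. x (n + d i) (s i))" for n
    define M\<^sub>0 where "M\<^sub>0 = min M (N - d k)"
    have prefix: "\<bar>\<Sum>n=1..M\<^sub>0. P n\<bar> \<le> cross_corr k S N x"
    proof (cases "M\<^sub>0 = 0")
      case True
      then show ?thesis using cross_corr_nonneg[of k S N x] by simp
    next
      case False
      then have "1 \<le> M\<^sub>0" "M\<^sub>0 + d k \<le> N" by (auto simp: M\<^sub>0_def)
      then have "ccm_admissible k S N M\<^sub>0 d s"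
        using adm unfolding ccm_admissible_def by simp
      then show ?thesis unfolding P_def by (rule cross_corr_ge)
    qed
    have suffix: "\<bar>\<Sum>n=Suc M\<^sub>0..M. P n\<bar> \<le> t"
    proof (cases "M\<^sub>0 = M")
      case True
      then show ?thesis using t by simp
    next
      case False
      then have "M\<^sub>0 < M" "N \<le> M\<^sub>0 + d k" by (auto simp: M\<^sub>0_def)
      from admissible_tail_new_window[OF adm k this] obtain h s' a b
        where "(h, s', a, b) \<in> new_windows k S N N'"
          and "lag_sum k (lags k h) s' {a..b} (case_prod x) = (\<Sum>n=Suc M\<^sub>0..M. P n)"
        unfolding P_def .
      then show ?thesis using small unfolding large_new_window_def by (auto simp: not_less)
    qed
    have "(\<Sum>n=1..M. P n) = (\<Sum>n=1..M\<^sub>0. P n) + (\<Sum>n=Suc M\<^sub>0..M. P n)"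
      using sum.ub_add_nat[of 1 M\<^sub>0 P "M - M\<^sub>0"] by (simp add: M\<^sub>0_def)
    then show "\<bar>\<Sum>n=1..M. \<Prod>i=1..k. x (n + d i) (s i)\<bar> \<le> cross_corr k S N x + t"
      using prefix suffix unfolding P_def by linarith
  qed
  then show ?thesis by linarith
qed

lemma lag_sum_new_window_cong:
  assumes "(h, s, a, b) \<in> new_windows k S N N'" and "\<forall>c\<in>{1..N'} \<times> {1..S}. x c = y c"
  shows "lag_sum k (lags k h) s {a..b} x = lag_sum k (lags k h) s {a..b} y"
  unfolding lag_sum_def lag_prod_def
proof (intro sum.cong refl prod.cong)
  fix m i assume m: "m \<in> {a..b}" and i: "i \<in> {1..k}"
  from assms(1) have "s i \<in> {1..S}" "lags k h i < a" "b \<le> N'"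
    using i unfolding new_windows_def by (auto simp: PiE_iff)
  with m have "(m - lags k h i, s i) \<in> {1..N'} \<times> {1..S}" by auto
  with assms(2) show "x (m - lags k h i, s i) = y (m - lags k h i, s i)" by blast
qed

lemma large_new_window_cong:
  assumes "\<forall>c\<in>{1..N'} \<times> {1..S}. x c = y c"
  shows "large_new_window k S N N' t x = large_new_window k S N N' t y"
  unfolding large_new_window_def
proof (rule bex_cong[OF refl], clarify)
  fix h s a b assume "(h, s, a, b) \<in> new_windows k S N N'"
  then show "(t < \<bar>lag_sum k (lags k h) s {a..b} x\<bar>) = (t < \<bar>lag_sum k (lags k h) s {a..b} y\<bar>)"
    using lag_sum_new_window_cong[OF _ assms] by simp
qed

lemma card_sign_configs_large_new_window:
  fixes t :: real and N' S :: nat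
  assumes k: "k \<ge> 1" and t: "t \<ge> 0"
  defines "C \<equiv> {1..N'} \<times> {1..S}"
  shows "real (card {x\<in>sign_configs C. large_new_window k S N N' t x})
    \<le> (\<Sum>(h, s, a, b)\<in>new_windows k S N N'.
         2 * real (card (sign_configs C)) * exp (- (t^2 / (2 * real (card {a..b})))))"
proof -
  define bad where "bad = (\<lambda>(h, s, a, b). {x\<in>sign_configs C. t < \<bar>lag_sum k (lags k h) s {a..b} x\<bar>})"
  have "{x\<in>sign_configs C. large_new_window k S N N' t x} = (\<Union>\<tau>\<in>new_windows k S N N'. bad \<tau>)"
    unfolding large_new_window_def bad_def by auto
  then have "card {x\<in>sign_configs C. large_new_window k S N N' t x} \<le> (\<Sum>\<tau>\<in>new_windows k S N N'. card (bad \<tau>))"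
    by (simp add: card_UN_le new_windows_finite)
  then have "real (card {x\<in>sign_configs C. large_new_window k S N N' t x})
      \<le> real (\<Sum>\<tau>\<in>new_windows k S N N'. card (bad \<tau>))"
    by (rule of_nat_mono)
  also have "\<dots> = (\<Sum>\<tau>\<in>new_windows k S N N'. real (card (bad \<tau>)))"
    by (rule of_nat_sum)
  also have "\<dots> \<le> (\<Sum>(h, s, a, b)\<in>new_windows k S N N'.
         2 * real (card (sign_configs C)) * exp (- (t^2 / (2 * real (card {a..b})))))"
  proof (rule sum_mono, clarify)
    fix h s a b assume "(h, s, a, b) \<in> new_windows k S N N'"
    then have window: "s \<in> PiE {1..k} (\<lambda>_. {1..S})" "a \<le> b" "b \<le> N'"
        "\<forall>i\<in>{1..k}. lags k h i < a"
        "\<forall>i\<in>{1..k}. \<forall>j\<in>{1..k}. i \<noteq> j \<longrightarrow> (lags k h i, s i) \<noteq> (lags k h j, s j)"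
      unfolding new_windows_def by auto
    have inside: "lags k h i < m \<and> (m - lags k h i, s i) \<in> C"
      if "m \<in> {a..b}" "i \<in> {1..k}" for m i
    proof -
      have "lags k h i < a" "s i \<in> {1..S}" using window(1,4) that(2) by (auto simp: PiE_iff)
      then show ?thesis using that(1) window(3) by (auto simp: C_def)
    qed
    have distinct: "(lags k h i, s i) \<noteq> (lags k h j, s j)"
      if "i \<in> {1..k}" "j \<in> {1..k}" "i \<noteq> j" for i j
      using window(5) that by blast
    have "finite C" "{a..b} \<noteq> {}" using window(2) by (auto simp: C_def)
    then show "real (card (bad (h, s, a, b)))
        \<le> 2 * real (card (sign_configs C)) * exp (- (t^2 / (2 * real (card {a..b}))))"
      unfolding bad_def case_prod_conv
      by (rule card_sign_configs_abs_lag_sum_gt[OF _ finite_atLeastAtMost _ k t inside distinct])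
  qed
  finally show ?thesis .
qed

section \<open>Summing the tail bounds over all windows\<close>

lemma sum_power_inj_le_geometric:
  fixes q :: real
  assumes q: "0 \<le> q" "q < 1" and "finite A" "inj_on f A"
  shows "(\<Sum>a\<in>A. q ^ f a) \<le> 1 / (1 - q)"
proof -
  have "(\<Sum>a\<in>A. q ^ f a) = (\<Sum>i\<in>f ` A. q ^ i)" using assms by (simp add: sum.reindex)
  also have "\<dots> \<le> (\<Sum>i. q ^ i)"
    using assms by (intro sum_le_suminf summable_geometric) auto
  also have "\<dots> = 1 / (1 - q)" using q by (intro suminf_geometric) auto
  finally show ?thesis .
qed

lemma inverse_one_minus_exp_le:
  fixes y :: real
  assumes "y > 0"
  shows "1 / (1 - exp (- y)) \<le> 1 + 1 / y"
proof -
  have "1 + y \<le> exp y" by (rule exp_ge_add_one_self)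
  then have "y / (1 + y) \<le> 1 - exp (- y)" using assms by (simp add: exp_minus field_simps)
  moreover have "y / (1 + y) > 0" using assms by simp
  ultimately have "1 / (1 - exp (- y)) \<le> 1 / (y / (1 + y))"
    using assms by (intro divide_left_mono mult_pos_pos) auto
  also have "\<dots> = 1 + 1 / y" using assms by (simp add: field_simps)
  finally show ?thesis .
qed

text \<open>With L = b - a + 1 \<le> u the bound amounts to u / L \<ge> (2u - L) / u, i.e. L (2u - L) \<le> u^2.\<close>
lemma exp_window_weight_le:
  fixes \<beta> :: real
  assumes \<beta>: "\<beta> > 0" and ab: "N < a" "a \<le> b" "b \<le> N'"
  defines "u \<equiv> real N' - real N"
  shows "exp (- (\<beta> * u / card {a..b})) \<le> exp (- \<beta>) * (exp (- \<beta> / u) ^ (N' - b) * exp (- \<beta> / u) ^ (a - N - 1))"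
proof -
  define L where "L = real (card {a..b})"
  have L: "L > 0" "real ((N' - b) + (a - N - 1)) = u - L"
    using ab by (auto simp: L_def u_def of_nat_diff)
  then have u: "u > 0" using ab by (simp add: u_def)
  have "L * (2 * u - L) \<le> u * u"
    using zero_le_power2[of "u - L"] by (simp add: power2_eq_square algebra_simps)
  then have "(2 * u - L) / u \<le> u / L" using u L by (simp add: field_simps)
  then have "\<beta> * ((2 * u - L) / u) \<le> \<beta> * (u / L)" using \<beta> by (intro mult_left_mono) auto
  then have "- (\<beta> * u / L) \<le> - \<beta> + real ((N' - b) + (a - N - 1)) * (- \<beta> / u)"
    unfolding L(2) using u by (simp add: field_simps)
  then have "exp (- (\<beta> * u / L)) \<le> exp (- \<beta> + real ((N' - b) + (a - N - 1)) * (- \<beta> / u))"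
    by simp
  also have "\<dots> = exp (- \<beta>) * (exp (- \<beta> / u) ^ (N' - b) * exp (- \<beta> / u) ^ (a - N - 1))"
    by (simp only: exp_add exp_of_nat_mult power_add)
  finally show ?thesis by (simp add: L_def)
qed

lemma new_windows_weight_sum_le:
  fixes \<beta> :: real
  assumes \<beta>: "\<beta> > 0" and "N < N'"
  defines "u \<equiv> real N' - real N"
  shows "(\<Sum>(h, s, a, b)\<in>new_windows k S N N'. exp (- (\<beta> * u / card {a..b})))
         \<le> real N' ^ (k - 1) * real S ^ k * exp (- \<beta>) * (1 + u / \<beta>)^2"
proof -
  have u: "u > 0" using assms by (simp add: u_def)
  define q where "q = exp (- \<beta> / u)"
  have q: "0 \<le> q" "q < 1" using \<beta> u by (auto simp: q_def)
  have geometric: "1 / (1 - q) \<le> 1 + u / \<beta>"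
    using inverse_one_minus_exp_le[of "\<beta> / u"] \<beta> u by (simp add: q_def)
  define I where "I = {N<..N'}"
  define H where "H = PiE {1..k-1} (\<lambda>_. {..<N'})"
  define \<Sigma> where "\<Sigma> = PiE {1..k} (\<lambda>_. {1..S})"
  have finite: "finite I" "finite H" "finite \<Sigma>" unfolding I_def H_def \<Sigma>_def by (auto intro: finite_PiE)
  have "(\<Sum>(h, s, a, b)\<in>new_windows k S N N'. exp (- (\<beta> * u / card {a..b})))
      \<le> (\<Sum>(h, s, a, b)\<in>new_windows k S N N'. exp (- \<beta>) * (q ^ (N' - b) * q ^ (a - N - 1)))"
  proof (rule sum_mono, clarify)
    fix h s a b assume "(h, s, a, b) \<in> new_windows k S N N'"
    then have "N < a" "a \<le> b" "b \<le> N'" by (auto simp: new_windows_def)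
    then show "exp (- (\<beta> * u / card {a..b})) \<le> exp (- \<beta>) * (q ^ (N' - b) * q ^ (a - N - 1))"
      unfolding q_def u_def by (rule exp_window_weight_le[OF \<beta>])
  qed
  also have "\<dots> \<le> (\<Sum>(h, s, a, b)\<in>H \<times> \<Sigma> \<times> I \<times> I. exp (- \<beta>) * (q ^ (N' - b) * q ^ (a - N - 1)))"
    using finite q by (intro sum_mono2) (auto simp: new_windows_def H_def \<Sigma>_def I_def)
  also have "\<dots> = real (card H) * real (card \<Sigma>) * exp (- \<beta>)
      * ((\<Sum>b\<in>I. q ^ (N' - b)) * (\<Sum>a\<in>I. q ^ (a - N - 1)))"
    by (simp add: sum.cartesian_product[symmetric] sum_distrib_left sum_distrib_right
        sum_product mult_ac)
  also have "\<dots> \<le> real N' ^ (k - 1) * real S ^ k * exp (- \<beta>) * (1 + u / \<beta>)^2"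
  proof -
    have "inj_on (\<lambda>b. N' - b) I" "inj_on (\<lambda>a. a - N - 1) I"
      unfolding I_def inj_on_def by auto
    then have "(\<Sum>b\<in>I. q ^ (N' - b)) \<le> 1 + u / \<beta>" "(\<Sum>a\<in>I. q ^ (a - N - 1)) \<le> 1 + u / \<beta>"
      using sum_power_inj_le_geometric[OF q finite(1)] geometric by (meson order_trans)+
    then have "(\<Sum>b\<in>I. q ^ (N' - b)) * (\<Sum>a\<in>I. q ^ (a - N - 1)) \<le> (1 + u / \<beta>)^2"
      unfolding power2_eq_square using q u \<beta> by (intro mult_mono sum_nonneg) auto
    moreover have "card H = N' ^ (k - 1)" "card \<Sigma> = S ^ k"
      unfolding H_def \<Sigma>_def by (simp_all add: card_PiE)
    ultimately show ?thesis by (simp add: mult_left_mono)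
  qed
  finally show ?thesis .
qed

lemma new_windows_bound_le:
  assumes k: "k \<ge> 2" and "N < N'" and "1 \<le> N"
  defines "u \<equiv> real N' - real N" and "\<beta> \<equiv> 3 * (real k - 1) * ln (real N')"
  shows "real N' ^ (k - 1) * real S ^ k * exp (- \<beta>) * (1 + u / \<beta>)^2
         \<le> 2 * real S ^ k * (1 / real N' ^ 2 + u / (real N' * ln (real N') ^ 2))"
proof -
  define K where "K = k - 1"
  have K: "K \<ge> 1" "real k - 1 = real K" using k by (auto simp: K_def)
  have N': "real N' \<ge> 2" using assms by auto
  have ln: "ln (real N') > 0" using N' by simp
  have u: "u > 0" "u \<le> real N'" using assms by (auto simp: u_def)
  have \<beta>: "\<beta> \<ge> ln (real N')" "\<beta> > 0" unfolding \<beta>_def K(2) using K ln by auto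
  have "\<beta> = real (3 * K) * ln (real N')" unfolding \<beta>_def K(2) by simp
  then have "exp \<beta> = real N' ^ (3 * K)"
    using N' by (simp only: exp_of_nat_mult exp_ln)
  then have "real N' ^ (k - 1) * exp (- \<beta>) = 1 / real N' ^ (2 * K)"
    using N' by (simp add: K_def exp_minus power_add[symmetric] field_simps)
  also have "\<dots> \<le> 1 / real N' ^ 2"
    using N' K by (intro divide_left_mono power_increasing) auto
  finally have power: "real N' ^ (k - 1) * exp (- \<beta>) \<le> 1 / real N' ^ 2" .
  have "u / \<beta> \<le> u / ln (real N')" using \<beta> u(1) ln by (simp add: frac_le)
  then have "(u / \<beta>)^2 \<le> (u / ln (real N'))^2" using u \<beta>(2) by (intro power_mono) auto
  then have ratio: "(u / \<beta>)^2 \<le> u^2 / ln (real N') ^ 2" by (simp add: power_divide)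
  have "(1 + v)^2 \<le> 2 + 2 * v^2" for v :: real
    using zero_le_power2[of "1 - v"] by (simp add: power2_eq_square algebra_simps)
  from this[of "u / \<beta>"] ratio have square: "(1 + u / \<beta>)^2 \<le> 2 + 2 * (u^2 / ln (real N') ^ 2)"
    by linarith
  have "u^2 / (real N' ^ 2 * ln (real N') ^ 2) = (u / real N') * (u / (real N' * ln (real N') ^ 2))"
    by (simp add: power2_eq_square field_simps)
  also have "\<dots> \<le> u / (real N' * ln (real N') ^ 2)"
    using u N' ln by (intro mult_left_le_one_le) auto
  finally have linear: "u^2 / (real N' ^ 2 * ln (real N') ^ 2) \<le> u / (real N' * ln (real N') ^ 2)" .
  have "real N' ^ (k - 1) * real S ^ k * exp (- \<beta>) * (1 + u / \<beta>)^2
      = real S ^ k * (real N' ^ (k - 1) * exp (- \<beta>)) * (1 + u / \<beta>)^2"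
    by (simp add: mult_ac)
  also have "\<dots> \<le> real S ^ k * (1 / real N' ^ 2) * (2 + 2 * (u^2 / ln (real N') ^ 2))"
    using power square by (intro mult_mono mult_left_mono) auto
  also have "\<dots> = 2 * real S ^ k * (1 / real N' ^ 2 + u^2 / (real N' ^ 2 * ln (real N') ^ 2))"
    using N' ln by (simp add: field_simps)
  also have "\<dots> \<le> 2 * real S ^ k * (1 / real N' ^ 2 + u / (real N' * ln (real N') ^ 2))"
    by (intro mult_left_mono add_left_mono linear) simp
  finally show ?thesis .
qed

section \<open>Probability estimates\<close>

context prob_space
begin

lemma AE_in_plus_minus_one:
  fixes X :: "'a \<Rightarrow> real"
  assumes [measurable]: "X \<in> borel_measurable M"
    and "prob {\<omega>\<in>space M. X \<omega> = 1} = 1/2" "prob {\<omega>\<in>space M. X \<omega> = -1} = 1/2"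
  shows "AE \<omega> in M. X \<omega> \<in> {-1, 1}"
proof -
  have events: "{\<omega>\<in>space M. X \<omega> = 1} \<in> events" "{\<omega>\<in>space M. X \<omega> = -1} \<in> events"
    by measurable
  have "prob ({\<omega>\<in>space M. X \<omega> = 1} \<union> {\<omega>\<in>space M. X \<omega> = -1})
      = prob {\<omega>\<in>space M. X \<omega> = 1} + prob {\<omega>\<in>space M. X \<omega> = -1}"
    by (rule finite_measure_Union[OF events]) auto
  with assms(2,3) have "prob ({\<omega>\<in>space M. X \<omega> = 1} \<union> {\<omega>\<in>space M. X \<omega> = -1}) = 1" by simp
  from AE_prob_1[OF this] show ?thesis by eventually_elim auto
qed

lemma prob_sign_pattern:
  fixes X :: "'i \<Rightarrow> 'a \<Rightarrow> real"
  assumes indep: "indep_vars (\<lambda>_. borel) X I" and C: "finite C" "C \<noteq> {}" "C \<subseteq> I"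
    and uniform: "\<And>c. c \<in> C \<Longrightarrow> prob {\<omega>\<in>space M. X c \<omega> = 1} = 1/2 \<and> prob {\<omega>\<in>space M. X c \<omega> = -1} = 1/2"
    and x: "x \<in> sign_configs C"
  shows "prob {\<omega>\<in>space M. \<forall>c\<in>C. X c \<omega> = x c} = (1/2) ^ card C"
proof -
  have "{\<omega>\<in>space M. \<forall>c\<in>C. X c \<omega> = x c} = (\<Inter>c\<in>C. X c -` {x c} \<inter> space M)"
    using C(2) by auto
  also have "prob \<dots> = (\<Prod>c\<in>C. prob (X c -` {x c} \<inter> space M))"
    by (rule indep_varsD[OF indep C(2) C(1) C(3)]) auto
  also have "\<dots> = (\<Prod>c\<in>C. 1/2)"
  proof (intro prod.cong refl)
    fix c assume c: "c \<in> C"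
    have "x c \<in> {-1, 1}" using x c by (auto simp: sign_configs_def PiE_iff)
    moreover have "X c -` {x c} \<inter> space M = {\<omega>\<in>space M. X c \<omega> = x c}" by auto
    ultimately show "prob (X c -` {x c} \<inter> space M) = 1/2" using uniform[OF c] by auto
  qed
  finally show ?thesis by simp
qed

lemma prob_le_card_sign_configs:
  fixes X :: "'i \<Rightarrow> 'a \<Rightarrow> real"
  assumes indep: "indep_vars (\<lambda>_. borel) X I" and C: "finite C" "C \<noteq> {}" "C \<subseteq> I"
    and uniform: "\<And>c. c \<in> C \<Longrightarrow> prob {\<omega>\<in>space M. X c \<omega> = 1} = 1/2 \<and> prob {\<omega>\<in>space M. X c \<omega> = -1} = 1/2"
    and local: "\<And>y z. (\<forall>c\<in>C. y c = z c) \<Longrightarrow> Q y = Q z"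
  shows "prob {\<omega>\<in>space M. Q (\<lambda>c. X c \<omega>)} \<le> card {x\<in>sign_configs C. Q x} / 2 ^ card C"
proof -
  define B where "B = {x\<in>sign_configs C. Q x}"
  define A where "A x = {\<omega>\<in>space M. \<forall>c\<in>C. X c \<omega> = x c}" for x :: "'i \<Rightarrow> real"
  have measurable: "X c \<in> borel_measurable M" if "c \<in> C" for c
    using indep C(3) that unfolding indep_vars_def by auto
  have "finite B" unfolding B_def using finite_sign_configs[OF C(1)] by simp
  have "A x = (\<Inter>c\<in>C. X c -` {x c} \<inter> space M)" for x
    using C(2) by (auto simp: A_def)
  then have A_events: "A x \<in> events" for x
    using C(1,2) measurable by (auto intro!: sets.finite_INT measurable_sets)
  have "AE \<omega> in M. \<forall>c\<in>C. X c \<omega> \<in> {-1, 1}"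
  proof (rule AE_finite_allI[OF C(1)])
    fix c assume "c \<in> C"
    then show "AE \<omega> in M. X c \<omega> \<in> {-1, 1}"
      using measurable uniform by (intro AE_in_plus_minus_one) auto
  qed
  then have "AE \<omega> in M. \<omega> \<in> {\<omega>\<in>space M. Q (\<lambda>c. X c \<omega>)} \<longrightarrow> \<omega> \<in> (\<Union>x\<in>B. A x)"
  proof eventually_elim
    case (elim \<omega>)
    define x where "x = restrict (\<lambda>c. X c \<omega>) C"
    have "x \<in> sign_configs C" using elim by (auto simp: x_def sign_configs_def PiE_iff)
    moreover have "Q x = Q (\<lambda>c. X c \<omega>)" by (rule local) (simp add: x_def)
    moreover have "\<omega> \<in> space M \<Longrightarrow> \<omega> \<in> A x" by (auto simp: A_def x_def)
    ultimately show ?case by (auto simp: B_def)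
  qed
  then have "prob {\<omega>\<in>space M. Q (\<lambda>c. X c \<omega>)} \<le> prob (\<Union>x\<in>B. A x)"
    using \<open>finite B\<close> A_events by (intro finite_measure_mono_AE) auto
  also have "\<dots> \<le> (\<Sum>x\<in>B. prob (A x))"
    using \<open>finite B\<close> A_events by (intro measure_UNION_le) auto
  also have "\<dots> = (\<Sum>x\<in>B. (1/2) ^ card C)"
    unfolding A_def using prob_sign_pattern[OF indep C uniform] by (intro sum.cong) (auto simp: B_def)
  also have "\<dots> = card B / 2 ^ card C" by (simp add: power_one_over)
  finally show ?thesis by (simp add: B_def)
qed

lemma AE_eventually_not_in:
  assumes "\<And>r. A r \<in> events" "\<And>r. prob (A r) \<le> c r" "summable c"
  shows "AE \<omega> in M. eventually (\<lambda>r. \<omega> \<notin> A r) sequentially"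
proof -
  have "summable (\<lambda>r. prob (A r))"
    using assms(2) by (intro summable_comparison_test'[OF assms(3), where N = 0]) simp
  then have "AE \<omega> in M. eventually (\<lambda>r. \<omega> \<in> space M - A r) sequentially"
    using assms(1) by (intro borel_cantelli_AE1) (auto simp: emeasure_eq_measure)
  then show ?thesis
  proof eventually_elim
    case (elim \<omega>)
    then show ?case by (rule eventually_mono) simp
  qed
qed

lemma prob_large_new_window:
  fixes e :: "nat \<Rightarrow> nat \<Rightarrow> 'a \<Rightarrow> real"
  assumes k: "k \<ge> 2" and S: "S \<ge> 1" and N: "N < N'" "1 \<le> N"
    and indep: "indep_vars (\<lambda>_. borel) (\<lambda>(n, s). e n s) {(n, s). 1 \<le> n \<and> 1 \<le> s \<and> s \<le> S}"
    and uniform: "\<And>n s. 1 \<le> n \<Longrightarrow> 1 \<le> s \<Longrightarrow> s \<le> S \<Longrightarrow>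
           prob {\<omega> \<in> space M. e n s \<omega> = 1} = 1/2 \<and> prob {\<omega> \<in> space M. e n s \<omega> = -1} = 1/2"
  defines "u \<equiv> real N' - real N"
  shows "prob {\<omega>\<in>space M. large_new_window k S N N' (sqrt (6 * u * (real k - 1) * ln (real N')))
                                (\<lambda>(n, s). e n s \<omega>)}
         \<le> 4 * real S ^ k * (1 / real N' ^ 2 + u / (real N' * ln (real N') ^ 2))"
proof -
  define C where "C = {1..N'} \<times> {1..S}"
  define \<beta> where "\<beta> = 3 * (real k - 1) * ln (real N')"
  define t where "t = sqrt (6 * u * (real k - 1) * ln (real N'))"
  have \<beta>: "\<beta> > 0" using k N by (simp add: \<beta>_def)
  have u: "u > 0" using N by (simp add: u_def)
  have "0 \<le> 6 * u * (real k - 1) * ln (real N')" using k N u by simp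
  then have t: "t \<ge> 0" "t^2 = 2 * \<beta> * u" by (simp_all add: t_def \<beta>_def algebra_simps)
  have C: "finite C" "C \<noteq> {}" "C \<subseteq> {(n, s). 1 \<le> n \<and> 1 \<le> s \<and> s \<le> S}"
    using N S by (auto simp: C_def)
  have "prob {\<omega>\<in>space M. large_new_window k S N N' t (\<lambda>c. (\<lambda>(n, s). e n s) c \<omega>)}
      \<le> card {x\<in>sign_configs C. large_new_window k S N N' t x} / 2 ^ card C"
  proof (rule prob_le_card_sign_configs[OF indep C])
    fix c assume "c \<in> C"
    then show "prob {\<omega>\<in>space M. (\<lambda>(n, s). e n s) c \<omega> = 1} = 1/2
        \<and> prob {\<omega>\<in>space M. (\<lambda>(n, s). e n s) c \<omega> = -1} = 1/2"
      using uniform by (auto simp: C_def)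
  next
    fix x y :: "nat \<times> nat \<Rightarrow> real" assume "\<forall>c\<in>C. x c = y c"
    then show "large_new_window k S N N' t x = large_new_window k S N N' t y"
      unfolding C_def by (rule large_new_window_cong)
  qed
  also have "\<dots> \<le> (\<Sum>(h, s, a, b)\<in>new_windows k S N N'.
         2 * real (card (sign_configs C)) * exp (- (t^2 / (2 * real (card {a..b}))))) / 2 ^ card C"
    using card_sign_configs_large_new_window[of k t N' S N] k t(1)
    by (intro divide_right_mono) (simp_all add: C_def)
  also have "\<dots> = (\<Sum>(h, s, a, b)\<in>new_windows k S N N'. 2 * exp (- (\<beta> * u / card {a..b})))"
    unfolding sum_divide_distrib card_sign_configs[OF C(1)] t(2)
    by (intro sum.cong refl) (simp split: prod.splits)
  also have "\<dots> \<le> 2 * (real N' ^ (k - 1) * real S ^ k * exp (- \<beta>) * (1 + u / \<beta>)^2)"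
    using new_windows_weight_sum_le[OF \<beta> N(1), of k S]
    by (simp add: u_def sum_distrib_left[symmetric] case_prod_unfold)
  also have "\<dots> \<le> 2 * (2 * real S ^ k * (1 / real N' ^ 2 + u / (real N' * ln (real N') ^ 2)))"
    using new_windows_bound_le[OF k N, of S] unfolding u_def \<beta>_def by linarith
  finally show ?thesis by (simp add: t_def case_prod_unfold)
qed

end

lemma summable_telescoping_le:
  fixes d f :: "nat \<Rightarrow> real"
  assumes "\<And>n. 0 \<le> d n" "\<And>n. d n \<le> f n - f (Suc n)" "\<And>n. f n \<ge> 0"
  shows "summable d"
proof (rule summableI_nonneg_bounded[where x = "f 0"])
  show "0 \<le> d n" for n by (rule assms(1))
  fix n
  have "(\<Sum>i<n. d i) \<le> (\<Sum>i<n. f i - f (Suc i))" by (intro sum_mono assms(2))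
  also have "\<dots> = f 0 - f n" by (rule sum_lessThan_telescope')
  also have "\<dots> \<le> f 0" using assms(3)[of n] by simp
  finally show "(\<Sum>i<n. d i) \<le> f 0" .
qed

lemma inverse_square_le_diff_inverse:
  fixes a b :: real
  assumes "1 \<le> a" "a + 1 \<le> b"
  shows "1 / b^2 \<le> 1 / a - 1 / b"
proof -
  have "1 / b^2 \<le> 1 / (a * b)"
    using assms by (intro divide_left_mono) (auto simp: power2_eq_square)
  also have "\<dots> \<le> (b - a) / (a * b)"
    using assms by (intro divide_right_mono) auto
  also have "\<dots> = 1 / a - 1 / b" using assms by (simp add: field_simps)
  finally show ?thesis .
qed

lemma increment_div_ln_square_le_diff_inverse_ln:
  fixes a b :: real
  assumes "2 \<le> a" "a < b"
  shows "(b - a) / (b * ln b ^ 2) \<le> 1 / ln a - 1 / ln b"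
proof -
  have ln: "ln a > 0" "ln a \<le> ln b" using assms by auto
  have "ln (a / b) \<le> a / b - 1" using assms by (intro ln_le_minus_one) auto
  then have increment: "(b - a) / b \<le> ln b - ln a" using assms by (simp add: ln_div field_simps)
  have "(b - a) / (b * ln b ^ 2) = ((b - a) / b) / ln b ^ 2" by simp
  also have "\<dots> \<le> (ln b - ln a) / ln b ^ 2"
    using increment ln by (intro divide_right_mono) auto
  also have "\<dots> \<le> (ln b - ln a) / (ln a * ln b)"
    using increment ln assms
    by (intro divide_left_mono) (auto simp: power2_eq_square intro: order_trans[OF _ increment])
  also have "\<dots> = 1 / ln a - 1 / ln b" using ln by (simp add: field_simps)
  finally show ?thesis .
qed

lemma summable_increment_bound:
  fixes Ns :: "nat \<Rightarrow> nat" and c :: real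
  assumes mono: "strict_mono Ns" and pos: "\<And>r. Ns r \<ge> 1"
  shows "summable (\<lambda>r. c * (1 / real (Ns (Suc r)) ^ 2 +
           (real (Ns (Suc r)) - real (Ns r)) / (real (Ns (Suc r)) * ln (real (Ns (Suc r))) ^ 2)))"
proof -
  have lt: "Ns r < Ns (Suc r)" for r using mono by (simp add: strict_mono_Suc_iff)
  have ge2: "Ns (Suc r) \<ge> 2" for r using lt[of r] pos[of r] by linarith
  have "real (Ns r) + 1 \<le> real (Ns (Suc r))" for r using lt[of r] by (simp add: nat_less_real_le)
  then have "summable (\<lambda>r. 1 / real (Ns (Suc r)) ^ 2)"
    using pos by (intro summable_telescoping_le[where f = "\<lambda>r. 1 / real (Ns r)"]
        inverse_square_le_diff_inverse) auto
  moreover define d where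
    "d r = (real (Ns (Suc r)) - real (Ns r)) / (real (Ns (Suc r)) * ln (real (Ns (Suc r))) ^ 2)" for r
  have "summable (\<lambda>r. d (Suc r))"
  proof (rule summable_telescoping_le[where f = "\<lambda>r. 1 / ln (real (Ns (Suc r)))"])
    show "0 \<le> d (Suc n)" for n using lt[of "Suc n"] by (simp add: d_def)
    show "d (Suc n) \<le> 1 / ln (real (Ns (Suc n))) - 1 / ln (real (Ns (Suc (Suc n))))" for n
      unfolding d_def using ge2[of n] lt[of "Suc n"] by (intro increment_div_ln_square_le_diff_inverse_ln) auto
    show "0 \<le> 1 / ln (real (Ns (Suc n)))" for n using ge2[of n] by simp
  qed
  then have "summable d" by (simp add: summable_Suc_iff)
  ultimately show ?thesis unfolding d_def by (intro summable_mult summable_add)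
qed

lemma large_new_window_event:
  assumes "\<And>n s. e n s \<in> borel_measurable M"
  shows "{\<omega>\<in>space M. large_new_window k S N N' t (\<lambda>(n, s). e n s \<omega>)} \<in> sets M"
proof -
  have [measurable]: "(\<lambda>\<omega>. lag_sum k h s W (\<lambda>(n, s). e n s \<omega>)) \<in> borel_measurable M" for h s W
    unfolding lag_sum_def lag_prod_def using assms by (auto intro!: borel_measurable_sum borel_measurable_prod)
  have "{\<omega>\<in>space M. large_new_window k S N N' t (\<lambda>(n, s). e n s \<omega>)}
      = (\<Union>(h, s, a, b)\<in>new_windows k S N N'.
           {\<omega>\<in>space M. t < \<bar>lag_sum k (lags k h) s {a..b} (\<lambda>(n, s). e n s \<omega>)\<bar>})"
    unfolding large_new_window_def by auto
  also have "\<dots> \<in> sets M"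
    using new_windows_finite by (intro sets.finite_UN) (auto split: prod.splits)
  finally show ?thesis .
qed

theorem lemma13:
  fixes M :: "'a measure" and e :: "nat \<Rightarrow> nat \<Rightarrow> 'a \<Rightarrow> real"
    and S k :: nat and Ns :: "nat \<Rightarrow> nat"
  assumes "prob_space M"
    and "S \<ge> 1" and "k \<ge> 2"
    and "\<And>n s. e n s \<in> borel_measurable M"
    and "prob_space.indep_vars M (\<lambda>_. borel) (\<lambda>(n, s). e n s)
           {(n, s). 1 \<le> n \<and> 1 \<le> s \<and> s \<le> S}"
    and "\<And>n s. 1 \<le> n \<Longrightarrow> 1 \<le> s \<Longrightarrow> s \<le> S \<Longrightarrow>
           measure M {\<omega> \<in> space M. e n s \<omega> = 1} = 1/2 \<and>
           measure M {\<omega> \<in> space M. e n s \<omega> = -1} = 1/2"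
    and "strict_mono Ns" and "\<And>r. Ns r \<ge> 1"
  shows "AE \<omega> in M. eventually (\<lambda>r.
           cross_corr k S (Ns (Suc r)) (\<lambda>n s. e n s \<omega>) - cross_corr k S (Ns r) (\<lambda>n s. e n s \<omega>)
           \<le> sqrt (6 * (real (Ns (Suc r)) - real (Ns r)) * (real k - 1) * ln (real (Ns (Suc r)))))
         sequentially"
proof -
  interpret prob_space M by (rule assms(1))
  define t where "t r = sqrt (6 * (real (Ns (Suc r)) - real (Ns r)) * (real k - 1) * ln (real (Ns (Suc r))))" for r
  define bad where "bad r = {\<omega>\<in>space M. large_new_window k S (Ns r) (Ns (Suc r)) (t r) (\<lambda>(n, s). e n s \<omega>)}" for r
  have increasing: "Ns r < Ns (Suc r)" for r using assms(7) by (simp add: strict_mono_Suc_iff)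
  have k: "k \<ge> 1" and t: "t r \<ge> 0" for r
    using increasing[of r] assms(3,8) by (simp_all add: t_def)
  have "AE \<omega> in M. eventually (\<lambda>r. \<omega> \<notin> bad r) sequentially"
  proof (rule AE_eventually_not_in)
    show "bad r \<in> events" for r unfolding bad_def by (rule large_new_window_event[OF assms(4)])
    show "prob (bad r) \<le> 4 * real S ^ k * (1 / real (Ns (Suc r)) ^ 2 + (real (Ns (Suc r)) - real (Ns r))
        / (real (Ns (Suc r)) * ln (real (Ns (Suc r))) ^ 2))" for r
      unfolding bad_def t_def by (rule prob_large_new_window[OF assms(3,2) increasing assms(8,5,6)])
  qed (rule summable_increment_bound[OF assms(7,8)])
  with AE_space show ?thesis
  proof eventually_elim
    case (elim \<omega>)
    from elim(2) show ?case unfolding t_def[symmetric]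
    proof (rule eventually_mono)
      fix r assume "\<omega> \<notin> bad r"
      with elim(1) have "\<not> large_new_window k S (Ns r) (Ns (Suc r)) (t r) (\<lambda>(n, s). e n s \<omega>)"
        by (simp add: bad_def)
      from cross_corr_increment_le[OF k t this] show "cross_corr k S (Ns (Suc r)) (\<lambda>n s. e n s \<omega>)
          - cross_corr k S (Ns r) (\<lambda>n s. e n s \<omega>) \<le> t r" .
    qed
  qed
qed

end
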